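(* Let $C\subseteq\mathbb{R}^5$ be a cone. The origin is an isolated point of $C\cap\mathfrak{M}$ if and only if one of the following holds: (i) $C$ is a line (through the origin) intersecting $T$ transversely; (ii) $C\subseteq T^>\cup(T\cap\mathfrak{M}^>)\cup\{0\}$; (iii) $C\subseteq T^<\cup(T\cap\mathfrak{M}^<)\cup\{0\}$.
   Context: A cone is the intersection of finitely many closed halfspaces of $\mathbb{R}^5$ whose bounding hyperplanes pass through the origin. In $\mathbb{R}^5$ with coordinates $(u_1,\dots,u_5)$, let $\mathfrak{M}=\{u_5=u_2u_3-u_1u_4\}$, $\mathfrak{M}^>=\{u_5>u_2u_3-u_1u_4\}$, $\mathfrak{M}^<=\{u_5<u_2u_3-u_1u_4\}$, $T=\{u_5=0\}$, $T^>=\{u_5>0\}$, $T^<=\{u_5<0\}$. *)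

theory Defs
  imports "HOL-Analysis.Analysis"
begin

text \<open>Points of R^5 are vectors of type real^5; coordinates u_1..u_5 are x$1..x$5
 (index 5 of type 5 is the fifth coordinate).\<close>

definition is_cone5 :: "(real^5) set \<Rightarrow> bool" where
  "is_cone5 C \<longleftrightarrow> (\<exists>A. finite A \<and> 0 \<notin> A \<and> C = {x. \<forall>a\<in>A. a \<bullet> x \<le> 0})"

definition qform :: "real^5 \<Rightarrow> real" where
  "qform u = u$2 * u$3 - u$1 * u$4"

definition MM :: "(real^5) set" where "MM = {u. u$5 = qform u}"
definition MM_gt :: "(real^5) set" where "MM_gt = {u. u$5 > qform u}"
definition MM_lt :: "(real^5) set" where "MM_lt = {u. u$5 < qform u}"
definition TT :: "(real^5) set" where "TT = {u. u$5 = 0}"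
definition TT_gt :: "(real^5) set" where "TT_gt = {u. u$5 > 0}"
definition TT_lt :: "(real^5) set" where "TT_lt = {u. u$5 < 0}"

definition transverse_line :: "(real^5) set \<Rightarrow> bool" where
  "transverse_line C \<longleftrightarrow> (\<exists>v. v \<noteq> 0 \<and> C = {t *\<^sub>R v | t. True} \<and> v \<notin> TT)"

end

theory Submission
  imports Defs
begin

text \<open>Write q for qform and M for MM. For t > 0 we have t x \<in> M iff x$5 = t q(x), so points of C \<inter> M near 0
lie on rays of C. A nonzero null vector (x$5 = q(x) = 0) spans a whole ray inside C \<inter> M; every
other nonzero vector lies on the upper side (x$5 > 0, or x$5 = 0 and q(x) < 0) or on the lower
side. If a, b \<in> C lie on opposite sides, then for every small t > 0 the function x$5 - t q(x)
changes sign along [a, b], and convexity yields points t p \<in> C \<inter> M, p \<in> [a, b], tending to 0,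
unless 0 \<in> [a, b]. So if 0 is isolated, either C - {0} lies on one side, or any two vectors of C
on opposite sides are antiparallel and C is a line transverse to T. Conversely, a transverse
line meets M in at most two points; and if C - {0} lies on one side, compactness of the unit
sphere in C bounds \<bar>x$5\<bar> below by a multiple of norm x wherever q(x) has the right sign, whereas
x$5 = q(x) = O(norm x ^ 2) on M.\<close>

definition upper_side :: "(real^5) set" where
  "upper_side = TT_gt \<union> (TT \<inter> MM_gt)"

definition lower_side :: "(real^5) set" where
  "lower_side = TT_lt \<union> (TT \<inter> MM_lt)"

lemma mem_upper_side: "x \<in> upper_side \<longleftrightarrow> 0 < x$5 \<or> (x$5 = 0 \<and> qform x < 0)"
  by (auto simp: upper_side_def TT_gt_def TT_def MM_gt_def)

lemma mem_lower_side: "x \<in> lower_side \<longleftrightarrow> x$5 < 0 \<or> (x$5 = 0 \<and> 0 < qform x)"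
  by (auto simp: lower_side_def TT_lt_def TT_def MM_lt_def)

lemma mem_TT_Int_MM: "x \<in> TT \<inter> MM \<longleftrightarrow> x$5 = 0 \<and> qform x = 0"
  by (auto simp: TT_def MM_def)

lemma upper_lower_null_cases:
  obtains "x \<in> upper_side" | "x \<in> lower_side" | "x \<in> TT \<inter> MM"
  unfolding mem_upper_side mem_lower_side mem_TT_Int_MM by force

lemma upper_side_Int_lower_side: "upper_side \<inter> lower_side = {}"
  by (auto simp: mem_upper_side mem_lower_side)

lemma qform_0 [simp]: "qform 0 = 0"
  by (simp add: qform_def)

lemma zero_notin_upper_side: "0 \<notin> upper_side" and zero_notin_lower_side: "0 \<notin> lower_side"
  by (simp_all add: mem_upper_side mem_lower_side)

lemma qform_scaleR: "qform (t *\<^sub>R x) = t\<^sup>2 * qform x"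
  by (simp add: qform_def power2_eq_square algebra_simps)

lemma scaleR_mem_MM_iff: "t \<noteq> 0 \<Longrightarrow> t *\<^sub>R x \<in> MM \<longleftrightarrow> x$5 = t * qform x"
  by (simp add: MM_def qform_scaleR power2_eq_square)

lemma abs_qform_le: "\<bar>qform x\<bar> \<le> 2 * (norm x)\<^sup>2"
proof -
  have prod: "\<bar>x$i * x$j\<bar> \<le> (norm x)\<^sup>2" for i j
    unfolding abs_mult power2_eq_square
    by (intro mult_mono component_le_norm_cart) auto
  show ?thesis
    unfolding qform_def using prod[of 2 3] prod[of 1 4] by linarith
qed

lemma is_cone5_closed_convex_cone:
  assumes "is_cone5 C"
  shows "closed C" "convex_cone C"
proof -
  obtain A where "C = (\<Inter>a\<in>A. {x. a \<bullet> x \<le> 0})"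
    using assms unfolding is_cone5_def by auto
  then show "closed C" "convex_cone C"
    by (auto intro!: closed_INT closed_halfspace_le convex_cone_Inter simp: convex_cone_halfspace_le)
qed

lemma null_ray_imp_islimpt:
  assumes "conic C" "x \<in> C \<inter> TT \<inter> MM" "x \<noteq> 0"
  shows "0 islimpt (C \<inter> MM)"
  unfolding islimpt_approachable
proof (intro allI impI)
  fix e :: real assume "0 < e"
  define t where "t = e / (2 * norm x)"
  have "0 < t" using \<open>0 < e\<close> \<open>x \<noteq> 0\<close> by (simp add: t_def)
  have "t *\<^sub>R x \<in> C \<inter> MM"
    using assms \<open>0 < t\<close> by (simp add: conicD qform_scaleR TT_def MM_def)
  moreover have "dist (t *\<^sub>R x) 0 < e"
    using \<open>0 < e\<close> \<open>x \<noteq> 0\<close> by (simp add: t_def)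
  ultimately show "\<exists>y\<in>C \<inter> MM. y \<noteq> 0 \<and> dist y 0 < e"
    using \<open>0 < t\<close> \<open>x \<noteq> 0\<close> by (intro bexI[of _ "t *\<^sub>R x"]) auto
qed

lemma eventually_upper_side_dominates:
  assumes "x \<in> upper_side"
  shows "\<forall>\<^sub>F t in at_right 0. t * qform x \<le> x$5"
proof (cases "0 < x$5")
  case True
  have "((\<lambda>t. t * qform x) \<longlongrightarrow> 0) (at_right 0)"
    by (auto intro!: tendsto_eq_intros)
  from order_tendstoD(2)[OF this True] have "\<forall>\<^sub>F t in at_right 0. t * qform x < x$5" .
  then show ?thesis by (rule eventually_mono) simp
next
  case False
  with assms have "x$5 = 0" "qform x < 0" by (auto simp: mem_upper_side)
  show ?thesis
    using eventually_at_right_less[of 0]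
    by (rule eventually_mono) (simp add: \<open>x$5 = 0\<close> \<open>qform x < 0\<close> mult_pos_neg less_imp_le)
qed

lemma eventually_lower_side_dominates:
  assumes "x \<in> lower_side"
  shows "\<forall>\<^sub>F t in at_right 0. x$5 \<le> t * qform x"
proof (cases "x$5 < 0")
  case True
  have "((\<lambda>t. t * qform x) \<longlongrightarrow> 0) (at_right 0)"
    by (auto intro!: tendsto_eq_intros)
  from order_tendstoD(1)[OF this True] have "\<forall>\<^sub>F t in at_right 0. x$5 < t * qform x" .
  then show ?thesis by (rule eventually_mono) simp
next
  case False
  with assms have "x$5 = 0" "0 < qform x" by (auto simp: mem_lower_side)
  show ?thesis
    using eventually_at_right_less[of 0]
    by (rule eventually_mono) (simp add: \<open>x$5 = 0\<close> \<open>0 < qform x\<close> less_imp_le)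
qed

lemma segment_meets_scaled_MM:
  assumes "t * qform a \<le> a$5" "b$5 \<le> t * qform b"
  shows "\<exists>p\<in>closed_segment a b. p$5 = t * qform p"
proof -
  define f where "f p = p$5 - t * qform p" for p :: "real^5"
  have "continuous_on (closed_segment a b) f"
    unfolding f_def qform_def by (intro continuous_intros)
  then have "connected (f ` closed_segment a b)"
    by (rule connected_continuous_image) simp
  moreover have "f b \<le> 0" "0 \<le> f a" using assms by (simp_all add: f_def)
  ultimately have "0 \<in> f ` closed_segment a b"
    unfolding connected_iff_interval by (meson ends_in_segment imageI)
  then show ?thesis by (auto simp: f_def)
qed

lemma opposite_sides_imp_islimpt:
  assumes C: "convex_cone C" and a: "a \<in> C \<inter> upper_side" and b: "b \<in> C \<inter> lower_side"
    and nz: "0 \<notin> closed_segment a b"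
  shows "0 islimpt (C \<inter> MM)"
  unfolding islimpt_approachable
proof (intro allI impI)
  fix e :: real assume "0 < e"
  have "\<forall>\<^sub>F t in at_right 0. t * qform a \<le> a$5 \<and> b$5 \<le> t * qform b
      \<and> 0 < t \<and> t * (norm a + norm b) < e"
  proof (intro eventually_conj eventually_upper_side_dominates eventually_lower_side_dominates
      eventually_at_right_less)
    have "((\<lambda>t. t * (norm a + norm b)) \<longlongrightarrow> 0 * (norm a + norm b)) (at_right 0)"
      by (intro tendsto_intros)
    then show "\<forall>\<^sub>F t in at_right 0. t * (norm a + norm b) < e"
      using \<open>0 < e\<close> by (auto dest: order_tendstoD(2))
  qed (use a b in auto)
  then obtain t where t: "t * qform a \<le> a$5" "b$5 \<le> t * qform b" "0 < t"
      "t * (norm a + norm b) < e"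
    using eventually_happens'[OF trivial_limit_at_right_real] by blast
  obtain p where p: "p \<in> closed_segment a b" "p$5 = t * qform p"
    using segment_meets_scaled_MM[OF t(1,2)] by blast
  have "p \<in> C"
    using p(1) a b C by (meson IntD1 convex_cone_def convex_contains_segment subsetD)
  have "norm p \<le> norm a + norm b"
    using segment_furthest_le[OF p(1), of 0] by (auto simp: add_increasing add_increasing2)
  then have "norm (t *\<^sub>R p) < e"
    using t(3,4) by (smt (verit) mult_left_mono norm_scaleR)
  moreover have "t *\<^sub>R p \<in> C \<inter> MM"
    using \<open>p \<in> C\<close> C p(2) t(3) by (simp add: convex_cone_scaleR scaleR_mem_MM_iff)
  moreover have "t *\<^sub>R p \<noteq> 0" using p(1) nz t(3) by auto
  ultimately show "\<exists>y\<in>C \<inter> MM. y \<noteq> 0 \<and> dist y 0 < e"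
    by (metis dist_0_norm dist_commute)
qed

lemma zero_in_segment_imp_antiparallel:
  fixes a b :: "'a::real_vector"
  assumes "0 \<in> closed_segment a b" "a \<noteq> 0" "b \<noteq> 0"
  obtains c where "c < 0" "a = c *\<^sub>R b"
proof -
  obtain u where u: "0 \<le> u" "u \<le> 1" "(1 - u) *\<^sub>R a + u *\<^sub>R b = 0"
    using assms(1) by (auto simp: in_segment)
  have "u \<noteq> 0" "u \<noteq> 1" using u assms(2,3) by auto
  have "(1 - u) *\<^sub>R a = - (u *\<^sub>R b)" using u(3) by (simp add: eq_neg_iff_add_eq_0)
  then have "a = (- u / (1 - u)) *\<^sub>R b"
    using \<open>u \<noteq> 1\<close> by (metis (no_types) divide_inverse_commute eq_vector_fraction_iff right_minus_eq scaleR_minus_left)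
  moreover have "- u / (1 - u) < 0" using u \<open>u \<noteq> 0\<close> \<open>u \<noteq> 1\<close> by simp
  ultimately show ?thesis using that by blast
qed

lemma not_islimpt_imp_antiparallel:
  assumes "convex_cone C" "\<not> 0 islimpt (C \<inter> MM)"
    and a: "a \<in> C \<inter> upper_side" and b: "b \<in> C \<inter> lower_side"
  obtains c where "c < 0" "b = c *\<^sub>R a"
proof -
  have "0 \<in> closed_segment b a"
    using opposite_sides_imp_islimpt[OF assms(1) a b] assms(2) closed_segment_commute by blast
  moreover have "a \<noteq> 0" "b \<noteq> 0"
    using a b zero_notin_upper_side zero_notin_lower_side by auto
  ultimately show ?thesis
    using zero_in_segment_imp_antiparallel that by blast
qed

lemma not_islimpt_imp_upper_or_lower:
  assumes "conic C" "\<not> 0 islimpt (C \<inter> MM)" "x \<in> C" "x \<noteq> 0"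
  shows "x \<in> upper_side \<union> lower_side"
  using null_ray_imp_islimpt[OF assms(1) _ assms(4)] assms(2,3)
  by (cases x rule: upper_lower_null_cases) auto

lemma both_sides_imp_transverse_line:
  assumes C: "convex_cone C" and iso: "\<not> 0 islimpt (C \<inter> MM)"
    and z: "z \<in> C \<inter> upper_side" and y: "y \<in> C \<inter> lower_side"
  shows "transverse_line C"
proof -
  obtain c where c: "c < 0" "y = c *\<^sub>R z"
    using not_islimpt_imp_antiparallel[OF C iso z y] .
  have "w \<in> range (\<lambda>t. t *\<^sub>R z)" if "w \<in> C" for w
  proof (cases w rule: upper_lower_null_cases)
    case 1
    then obtain c' where "c' < 0" "y = c' *\<^sub>R w"
      using not_islimpt_imp_antiparallel[OF C iso _ y] \<open>w \<in> C\<close> by blast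
    then have "w = (c / c') *\<^sub>R z"
      using c by (metis divide_inverse_commute eq_vector_fraction_iff less_irrefl)
    then show ?thesis by blast
  next
    case 2
    then show ?thesis
      using not_islimpt_imp_antiparallel[OF C iso z] \<open>w \<in> C\<close> by blast
  next
    case 3
    then have "w = 0"
      using null_ray_imp_islimpt[of C w] C iso \<open>w \<in> C\<close> by (auto simp: convex_cone_def)
    then show ?thesis by (auto intro: range_eqI[of _ _ 0])
  qed
  moreover have "t *\<^sub>R z \<in> C" for t
  proof (cases "0 \<le> t")
    case True
    then show ?thesis using C z by (simp add: convex_cone_scaleR)
  next
    case False
    have "t *\<^sub>R z = (t / c) *\<^sub>R y" using c by simp
    moreover have "0 \<le> t / c" using c False by (simp add: divide_nonpos_neg)
    ultimately show ?thesis using C y by (simp add: convex_cone_scaleR)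
  qed
  moreover have "z$5 \<noteq> 0"
  proof
    assume "z$5 = 0"
    with z have "qform z < 0" by (simp add: mem_upper_side)
    then have "y \<in> upper_side"
      using c \<open>z$5 = 0\<close> by (simp add: mem_upper_side qform_scaleR mult_pos_neg)
    then show False using y upper_side_Int_lower_side by blast
  qed
  moreover have "z \<noteq> 0" using z zero_notin_upper_side by auto
  ultimately show ?thesis
    unfolding transverse_line_def TT_def by (intro exI[of _ z]) auto
qed

lemma transverse_line_imp_not_islimpt:
  assumes "transverse_line C"
  shows "\<not> 0 islimpt (C \<inter> MM)"
proof -
  obtain v where v: "C = {t *\<^sub>R v | t. True}" "v$5 \<noteq> 0"
    using assms unfolding transverse_line_def TT_def by auto
  have "C \<inter> MM \<subseteq> {0, (v$5 / qform v) *\<^sub>R v}"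
  proof
    fix x assume "x \<in> C \<inter> MM"
    then obtain t where t: "x = t *\<^sub>R v" "t *\<^sub>R v \<in> MM" using v(1) by auto
    show "x \<in> {0, (v$5 / qform v) *\<^sub>R v}"
    proof (cases "t = 0")
      case False
      then have "v$5 = t * qform v" using t(2) by (simp add: scaleR_mem_MM_iff)
      then have "t = v$5 / qform v" using v(2) by force
      then show ?thesis using t(1) by simp
    qed (use t in simp)
  qed
  then show ?thesis
    by (meson finite.emptyI finite_insert islimpt_finite islimpt_subset)
qed

lemma one_side_linear_lower_bound:
  fixes \<sigma> :: real
  assumes "closed C" "conic C"
    and side: "\<And>y. y \<in> C \<Longrightarrow> y \<noteq> 0 \<Longrightarrow> 0 < \<sigma> * y$5 \<or> (y$5 = 0 \<and> \<sigma> * qform y < 0)"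
  obtains m where "0 < m" "\<And>x. x \<in> C \<Longrightarrow> 0 \<le> \<sigma> * qform x \<Longrightarrow> m * norm x \<le> \<sigma> * x$5"
proof -
  define K where "K = C \<inter> sphere 0 1 \<inter> {y. 0 \<le> \<sigma> * qform y}"
  have "compact K"
    unfolding K_def qform_def using assms(1)
    by (intro closed_Int_compact compact_Int_closed closed_Collect_le continuous_intros) auto
  obtain m where m: "0 < m" "\<And>y. y \<in> K \<Longrightarrow> m \<le> \<sigma> * y$5"
  proof (cases "K = {}")
    case False
    have "continuous_on K (\<lambda>y. \<sigma> * y$5)" by (intro continuous_intros)
    then obtain y0 where y0: "y0 \<in> K" "\<And>y. y \<in> K \<Longrightarrow> \<sigma> * y0$5 \<le> \<sigma> * y$5"
      using continuous_attains_inf[OF \<open>compact K\<close> False] by blast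
    have "0 < \<sigma> * y0$5" using side[of y0] y0(1) by (force simp: K_def)
    then show ?thesis using that y0 by blast
  qed (use that[of 1] in simp)
  have "m * norm x \<le> \<sigma> * x$5" if "x \<in> C" "0 \<le> \<sigma> * qform x" for x
  proof (cases "x = 0")
    case False
    define y where "y = (1 / norm x) *\<^sub>R x"
    have "0 \<le> \<sigma> * qform y"
      using that(2) unfolding y_def qform_scaleR mult.left_commute[of \<sigma>] by simp
    then have "y \<in> K"
      using that(1) False assms(2) unfolding y_def K_def by (simp add: conicD)
    then have "m \<le> \<sigma> * x$5 / norm x" using m(2)[of y] by (simp add: y_def)
    then show ?thesis using False by (simp add: field_simps)
  qed simp
  with m(1) show ?thesis using that by blast
qed

lemma one_side_imp_not_islimpt:
  fixes \<sigma> :: real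
  assumes "closed C" "conic C" "\<bar>\<sigma>\<bar> = 1"
    and side: "\<And>y. y \<in> C \<Longrightarrow> y \<noteq> 0 \<Longrightarrow> 0 < \<sigma> * y$5 \<or> (y$5 = 0 \<and> \<sigma> * qform y < 0)"
  shows "\<not> 0 islimpt (C \<inter> MM)"
proof -
  obtain m where m: "0 < m" "\<And>x. x \<in> C \<Longrightarrow> 0 \<le> \<sigma> * qform x \<Longrightarrow> m * norm x \<le> \<sigma> * x$5"
    using one_side_linear_lower_bound[OF assms(1,2) side] by blast
  have "m / 2 \<le> norm x" if "x \<in> C \<inter> MM" "x \<noteq> 0" for x
  proof -
    have x5: "x$5 = qform x" using that by (simp add: MM_def)
    then have "0 \<le> \<sigma> * qform x" using side[of x] that by force
    then have "m * norm x \<le> \<sigma> * qform x"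
      using m(2)[of x] that x5 by simp
    also have "\<dots> \<le> \<bar>\<sigma> * qform x\<bar>" by (rule abs_ge_self)
    also have "\<dots> \<le> 2 * (norm x)\<^sup>2" using abs_qform_le assms(3) by (simp add: abs_mult)
    finally show ?thesis using that(2) by (simp add: power2_eq_square)
  qed
  then show ?thesis
    unfolding islimpt_approachable using m(1)
    by (metis dist_0_norm dist_commute half_gt_zero linorder_not_less)
qed

theorem lemma8:
  fixes C :: "(real^5) set"
  assumes "is_cone5 C"
  shows "(0::real^5) isolated_in (C \<inter> MM) \<longleftrightarrow>
           transverse_line C
         \<or> C \<subseteq> TT_gt \<union> (TT \<inter> MM_gt) \<union> {0}
         \<or> C \<subseteq> TT_lt \<union> (TT \<inter> MM_lt) \<union> {0}"
proof -
  have cl: "closed C" and C: "convex_cone C"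
    using is_cone5_closed_convex_cone[OF assms] by auto
  then have conic: "conic C" by (simp add: convex_cone_def)
  have "0 \<in> C \<inter> MM" using C by (simp add: convex_cone_contains_0 MM_def)
  then have "0 isolated_in (C \<inter> MM) \<longleftrightarrow> \<not> 0 islimpt (C \<inter> MM)"
    by (simp add: isolated_in_islimpt_iff)
  also have "\<dots> \<longleftrightarrow> transverse_line C \<or> C \<subseteq> upper_side \<union> {0} \<or> C \<subseteq> lower_side \<union> {0}"
  proof
    assume iso: "\<not> 0 islimpt (C \<inter> MM)"
    show "transverse_line C \<or> C \<subseteq> upper_side \<union> {0} \<or> C \<subseteq> lower_side \<union> {0}"
    proof (rule ccontr)
      assume "\<not> ?thesis"
      then obtain z y where "z \<in> C" "z \<notin> lower_side \<union> {0}" "y \<in> C" "y \<notin> upper_side \<union> {0}"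
        and "\<not> transverse_line C" by blast
      moreover have "z \<in> upper_side" "y \<in> lower_side"
        using not_islimpt_imp_upper_or_lower[OF conic iso] calculation by blast+
      ultimately show False using both_sides_imp_transverse_line[OF C iso] by blast
    qed
  next
    assume "transverse_line C \<or> C \<subseteq> upper_side \<union> {0} \<or> C \<subseteq> lower_side \<union> {0}"
    then show "\<not> 0 islimpt (C \<inter> MM)"
      using transverse_line_imp_not_islimpt one_side_imp_not_islimpt[OF cl conic, of 1]
        one_side_imp_not_islimpt[OF cl conic, of "-1"]
      by (auto simp: mem_upper_side mem_lower_side subset_iff)
  qed
  finally show ?thesis by (simp only: upper_side_def lower_side_def)
qed

end
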